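(* Let $g:[0,1]\to\mathbb{R}^+$ be Lebesgue integrable and let $f_{ac}(x)=\int_{[0,1]}g(t)\,(1\,!_t\,x)\,dt$ for $x\ge0$. Then (a) $f_{ac}$ is normalized, i.e. $f_{ac}(1)=1$, if and only if $\int_0^1 g(t)\,dt=1$; (b) $f_{ac}$ is symmetric, i.e. $f_{ac}(x)=xf_{ac}(1/x)$ for all $x>0$, if and only if $g(1-t)=g(t)$ for Lebesgue-a.e. $t\in[0,1]$.
   Context: For $t\in[0,1]$, $x\ge0$: $1\,!_t\,x=\dfrac{x}{(1-t)x+t}$ for $(t,x)\ne(0,0)$ and $1\,!_0\,0=1$. *)

theory Defs
  imports "HOL-Analysis.Analysis"
begin

text \<open>Weighted harmonic mean: 1 !_t x = x / ((1-t) x + t), with 1 !_0 0 = 1.\<close>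
definition harm_mean :: "real \<Rightarrow> real \<Rightarrow> real" where
  "harm_mean t x = (if t = 0 \<and> x = 0 then 1 else x / ((1 - t) * x + t))"

definition f_ac :: "(real \<Rightarrow> real) \<Rightarrow> real \<Rightarrow> real" where
  "f_ac g x = (LINT t:{0..1}|lborel. g t * harm_mean t x)"

end

theory Submission imports Defs begin

(* Part (a) is immediate: 1 !_t 1 = 1 for every t, so f_ac g 1 is the integral of g.
   Part (b) rests on the reflection identity  x (1 !_t (1/x)) = 1 !_(1-t) x,  which after
   the substitution t := 1 - t gives
       f_ac g x - x f_ac g (1/x) = \<integral>_[0,1] (g t - g (1-t)) (1 !_t x) dt.
   Hence symmetry follows at once from g (1-t) = g t a.e.  For the converse put
   x = 1/(1+y): then 1 !_t x = 1/(1+ty), so H t = g t - g (1-t) has a vanishing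
   Stieltjes-type transform  \<integral>_[0,1] H t / (1+ty) dt = 0  for all y > 0.  A uniqueness
   theorem for this transform, proved for any integrable F vanishing outside [0,1], gives
   H = 0 a.e.  Its proof is the chain
     vanishing transform \<Longrightarrow> vanishing moments   (t^k = t^k/(1+ty) + y t^(k+1)/(1+ty), y \<rightarrow> 0)
                         \<Longrightarrow> F orthogonal to continuous functions   (Weierstrass approximation)
                         \<Longrightarrow> F orthogonal to half-lines (a,\<infinity>)         (dominated convergence)
                         \<Longrightarrow> F = 0 a.e.                   (measures agreeing on half-lines agree). *)

section \<open>The weighted harmonic mean\<close>

lemma harm_mean_denom_pos:
  assumes "x > 0" "t \<in> {0..1::real}"
  shows "(1 - t) * x + t > 0"
proof (cases "t = 0")
  case False
  then have "t > 0" using assms by simp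
  moreover have "(1 - t) * x \<ge> 0" using assms by simp
  ultimately show ?thesis by linarith
qed (use assms in simp)

lemma harm_mean_pos_eq:
  assumes "x > 0" shows "harm_mean t x = x / ((1 - t) * x + t)"
  using assms by (simp add: harm_mean_def)

lemma harm_mean_bound:
  assumes x: "x > 0" and t: "t \<in> {0..1::real}"
  shows "\<bar>harm_mean t x\<bar> \<le> 1 + x"
proof -
  have d: "(1 - t) * x + t > 0" using harm_mean_denom_pos[OF x t] .
  have "(1 + x) * ((1 - t) * x + t) = x + (t + (1 - t) * x\<^sup>2)"
    by (simp add: algebra_simps power2_eq_square)
  moreover have "t + (1 - t) * x\<^sup>2 \<ge> 0" using t by simp
  ultimately have "x / ((1 - t) * x + t) \<le> 1 + x" using d by (simp add: divide_le_eq)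
  moreover have "x / ((1 - t) * x + t) \<ge> 0" using d x by simp
  ultimately show ?thesis by (simp only: harm_mean_pos_eq[OF x] abs_of_nonneg)
qed

lemma harm_mean_measurable [measurable]: "(\<lambda>t. harm_mean t x) \<in> borel_measurable borel"
  unfolding harm_mean_def by measurable

lemma harm_mean_reflect:
  assumes x: "x > 0" and t: "t \<in> {0..1::real}"
  shows "x * harm_mean t (1 / x) = harm_mean (1 - t) x"
proof -
  have "x * ((1 - t) * (1 / x) + t) = (1 - (1 - t)) * x + (1 - t)"
    using x by (simp add: field_simps)
  then show ?thesis
    using x by (simp add: harm_mean_pos_eq divide_divide_eq_left')
qed

lemma harm_mean_kernel:
  assumes y: "y > 0" and t: "t \<in> {0..1::real}"
  shows "harm_mean t (1 / (1 + y)) = 1 / (1 + t * y)"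
proof -
  have "(1 + y) * ((1 - t) * (1 / (1 + y)) + t) = 1 + t * y"
    using y by (simp add: field_simps)
  then show ?thesis
    using y by (simp add: harm_mean_pos_eq)
qed

section \<open>Uniqueness for the Stieltjes-type transform on [0,1]\<close>

lemma integrable_bounded_multiplier:
  fixes F \<phi> :: "real \<Rightarrow> real"
  assumes F: "integrable lborel F" and F_supp: "\<And>t. t \<notin> {0..1} \<Longrightarrow> F t = 0"
    and \<phi>: "\<phi> \<in> borel_measurable borel" and B: "\<And>t. t \<in> {0..1} \<Longrightarrow> \<bar>\<phi> t\<bar> \<le> B"
  shows "integrable lborel (\<lambda>t. F t * \<phi> t)"
    and "\<bar>\<integral>t. F t * \<phi> t \<partial>lborel\<bar> \<le> B * (\<integral>t. \<bar>F t\<bar> \<partial>lborel)"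
proof -
  have B0: "0 \<le> B" using B[of 0] by auto
  have pointwise: "\<bar>F t * \<phi> t\<bar> \<le> B * \<bar>F t\<bar>" for t
    using B[of t] B0 F_supp[of t]
    by (cases "t \<in> {0..1}") (auto simp: abs_mult mult.commute[of B] intro!: mult_left_mono)
  have [measurable]: "F \<in> borel_measurable lborel" using F by (rule borel_measurable_integrable)
  show int: "integrable lborel (\<lambda>t. F t * \<phi> t)"
  proof (rule Bochner_Integration.integrable_bound[where f = "\<lambda>t. B * F t"])
    show "(\<lambda>t. F t * \<phi> t) \<in> borel_measurable lborel" using \<phi> by measurable
  qed (use F pointwise B0 in \<open>auto simp: abs_mult\<close>)
  have "\<bar>\<integral>t. F t * \<phi> t \<partial>lborel\<bar> \<le> (\<integral>t. \<bar>F t * \<phi> t\<bar> \<partial>lborel)"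
    using integral_norm_bound[of lborel "\<lambda>t. F t * \<phi> t"] by simp
  also have "\<dots> \<le> (\<integral>t. B * \<bar>F t\<bar> \<partial>lborel)"
    by (rule integral_mono) (use int F pointwise in auto)
  finally show "\<bar>\<integral>t. F t * \<phi> t \<partial>lborel\<bar> \<le> B * (\<integral>t. \<bar>F t\<bar> \<partial>lborel)" by simp
qed

lemma eq_0_if_abs_le_small_multiples:
  fixes m C :: real
  assumes "\<And>y. y > 0 \<Longrightarrow> \<bar>m\<bar> \<le> y * C"
  shows "m = 0"
proof -
  have "((\<lambda>y. y * C) \<longlongrightarrow> 0 * C) (at_right 0)" by (intro tendsto_intros)
  moreover have "eventually (\<lambda>y. \<bar>m\<bar> \<le> y * C) (at_right 0)"
    using eventually_at_right_less[of 0] by eventually_elim (rule assms)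
  ultimately have "\<bar>m\<bar> \<le> 0 * C" by (intro tendsto_lowerbound) auto
  then show ?thesis by simp
qed

lemma kernel_moment_bound:
  fixes t y :: real
  assumes "t \<in> {0..1}" "y \<ge> 0"
  shows "\<bar>t ^ k / (1 + t * y)\<bar> \<le> 1"
proof -
  have "0 \<le> t ^ k" "t ^ k \<le> 1" using assms by (auto simp: power_le_one)
  moreover have "1 \<le> 1 + t * y" using assms by auto
  ultimately show ?thesis by (simp add: divide_le_eq_1)
qed

lemma integrable_moment_kernel:
  fixes F :: "real \<Rightarrow> real"
  assumes F: "integrable lborel F" and F_supp: "\<And>t. t \<notin> {0..1} \<Longrightarrow> F t = 0" and y: "y \<ge> 0"
  shows "integrable lborel (\<lambda>t. F t * (t ^ k / (1 + t * y)))"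
    and "\<bar>\<integral>t. F t * (t ^ k / (1 + t * y)) \<partial>lborel\<bar> \<le> (\<integral>t. \<bar>F t\<bar> \<partial>lborel)"
  using integrable_bounded_multiplier[OF F F_supp, of "\<lambda>t. t ^ k / (1 + t * y)" 1]
    kernel_moment_bound[OF _ y] by auto

lemma kernel_moment_split:
  fixes t y :: real
  assumes "1 + t * y \<noteq> 0"
  shows "t ^ k = t ^ k / (1 + t * y) + y * (t ^ Suc k / (1 + t * y))"
proof -
  have "t ^ k / (1 + t * y) + y * (t ^ Suc k / (1 + t * y)) = t ^ k * (1 + t * y) / (1 + t * y)"
    by (simp add: add_divide_distrib algebra_simps)
  then show ?thesis using assms by simp
qed

text \<open>One step of the moment recursion: integrating \<open>kernel_moment_split\<close> against \<open>F\<close> shows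
  that if the \<open>k\<close>-th weighted transform vanishes, then the \<open>k\<close>-th moment equals \<open>y\<close> times the
  \<open>(k+1)\<close>-st weighted transform, which is bounded; letting \<open>y \<rightarrow> 0\<close>, the moment vanishes, and
  then so does the \<open>(k+1)\<close>-st weighted transform.\<close>
lemma Stieltjes_moment_step:
  fixes F :: "real \<Rightarrow> real"
  assumes F: "integrable lborel F" and F_supp: "\<And>t. t \<notin> {0..1} \<Longrightarrow> F t = 0"
    and zero: "\<And>y. y > 0 \<Longrightarrow> (\<integral>t. F t * (t ^ k / (1 + t * y)) \<partial>lborel) = 0"
  shows "(\<integral>t. F t * t ^ k \<partial>lborel) = 0"
    and "\<And>y. y > 0 \<Longrightarrow> (\<integral>t. F t * (t ^ Suc k / (1 + t * y)) \<partial>lborel) = 0"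
proof -
  have split: "(\<integral>t. F t * t ^ k \<partial>lborel) = y * (\<integral>t. F t * (t ^ Suc k / (1 + t * y)) \<partial>lborel)"
    if y: "y > 0" for y
  proof -
    have pointwise: "F t * t ^ k = F t * (t ^ k / (1 + t * y)) + y * (F t * (t ^ Suc k / (1 + t * y)))"
      for t
    proof (cases "t \<in> {0..1}")
      case True
      then have "t * y \<ge> 0" using y by simp
      then have "1 + t * y \<noteq> 0" by linarith
      then have "F t * t ^ k = F t * (t ^ k / (1 + t * y) + y * (t ^ Suc k / (1 + t * y)))"
        by (rule arg_cong[OF kernel_moment_split])
      then show ?thesis by (simp only: distrib_left mult.left_commute[of "F t" y])
    qed (simp add: F_supp)
    have "(\<integral>t. F t * t ^ k \<partial>lborel)
        = (\<integral>t. F t * (t ^ k / (1 + t * y)) + y * (F t * (t ^ Suc k / (1 + t * y))) \<partial>lborel)"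
      by (intro Bochner_Integration.integral_cong refl pointwise)
    also have "\<dots> = (\<integral>t. F t * (t ^ k / (1 + t * y)) \<partial>lborel)
        + (\<integral>t. y * (F t * (t ^ Suc k / (1 + t * y))) \<partial>lborel)"
      using y by (intro Bochner_Integration.integral_add integrable_mult_right
          integrable_moment_kernel(1)[OF F F_supp]) simp_all
    also have "\<dots> = y * (\<integral>t. F t * (t ^ Suc k / (1 + t * y)) \<partial>lborel)"
      using zero[OF y] by (simp only: integral_mult_right_zero add_0_left)
    finally show ?thesis .
  qed
  have "\<bar>\<integral>t. F t * t ^ k \<partial>lborel\<bar> \<le> y * (\<integral>t. \<bar>F t\<bar> \<partial>lborel)" if "y > 0" for y
    using split[OF that] integrable_moment_kernel(2)[OF F F_supp, of y "Suc k"] that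
    by (simp add: abs_mult)
  then show moment: "(\<integral>t. F t * t ^ k \<partial>lborel) = 0" by (rule eq_0_if_abs_le_small_multiples)
  show "(\<integral>t. F t * (t ^ Suc k / (1 + t * y)) \<partial>lborel) = 0" if "y > 0" for y
    using split[OF that] moment that by simp
qed

lemma moments_vanish_of_Stieltjes_vanish:
  fixes F :: "real \<Rightarrow> real"
  assumes F: "integrable lborel F" and F_supp: "\<And>t. t \<notin> {0..1} \<Longrightarrow> F t = 0"
    and zero: "\<And>y. y > 0 \<Longrightarrow> (\<integral>t. F t * (1 / (1 + t * y)) \<partial>lborel) = 0"
  shows "(\<integral>t. F t * t ^ k \<partial>lborel) = 0"
proof -
  have "\<forall>y>0. (\<integral>t. F t * (t ^ k / (1 + t * y)) \<partial>lborel) = 0"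
  proof (induction k)
    case 0
    then show ?case using zero by simp
  next
    case (Suc k)
    then show ?case using Stieltjes_moment_step(2)[OF F F_supp] by blast
  qed
  then show ?thesis using Stieltjes_moment_step(1)[OF F F_supp] by blast
qed

lemma integrable_moment:
  fixes F :: "real \<Rightarrow> real"
  assumes F: "integrable lborel F" and F_supp: "\<And>t. t \<notin> {0..1} \<Longrightarrow> F t = 0"
  shows "integrable lborel (\<lambda>t. F t * t ^ k)"
  by (rule integrable_bounded_multiplier(1)[OF F F_supp, of _ 1]) (auto simp: power_le_one)

text \<open>Vanishing moments make \<open>F\<close> orthogonal to every continuous function: approximate it
  uniformly on [0,1] by polynomials (Stone-Weierstrass), which are orthogonal to \<open>F\<close>.\<close>
lemma integral_continuous_vanish_of_moments:
  fixes F \<phi> :: "real \<Rightarrow> real"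
  assumes F: "integrable lborel F" and F_supp: "\<And>t. t \<notin> {0..1} \<Longrightarrow> F t = 0"
    and moments: "\<And>k. (\<integral>t. F t * t ^ k \<partial>lborel) = 0"
    and \<phi>: "continuous_on UNIV \<phi>"
  shows "(\<integral>t. F t * \<phi> t \<partial>lborel) = 0"
proof (rule eq_0_if_abs_le_small_multiples)
  fix e :: real assume e: "e > 0"
  have "continuous_on {0..1} \<phi>" using \<phi> by (rule continuous_on_subset) auto
  then obtain p where p: "real_polynomial_function p"
    and close: "\<And>t. t \<in> {0..1} \<Longrightarrow> \<bar>\<phi> t - p t\<bar> < e"
    using Stone_Weierstrass_real_polynomial_function[of "{0..1::real}" \<phi> e] e by auto
  obtain a n where p_eq: "p = (\<lambda>t. \<Sum>i\<le>n. a i * t ^ i)"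
    using real_polynomial_function_imp_sum[OF p] by blast
  have p_expand: "(\<lambda>t. F t * p t) = (\<lambda>t. \<Sum>i\<le>n. a i * (F t * t ^ i))"
    unfolding p_eq by (simp add: sum_distrib_left algebra_simps)
  have p_int: "integrable lborel (\<lambda>t. F t * p t)"
    unfolding p_expand
    by (intro Bochner_Integration.integrable_sum integrable_mult_right integrable_moment[OF F F_supp])
  have p_orth: "(\<integral>t. F t * p t \<partial>lborel) = 0"
    unfolding p_expand
    by (subst Bochner_Integration.integral_sum) (auto intro: integrable_moment[OF F F_supp] simp: moments)
  have diff_meas: "(\<lambda>t. \<phi> t - p t) \<in> borel_measurable borel"
    unfolding p_eq using borel_measurable_continuous_onI[OF \<phi>] by measurable
  note diff = integrable_bounded_multiplier[OF F F_supp diff_meas, of e]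
  have "(\<integral>t. F t * \<phi> t \<partial>lborel) = (\<integral>t. F t * (\<phi> t - p t) + F t * p t \<partial>lborel)"
    by (simp add: algebra_simps)
  also have "\<dots> = (\<integral>t. F t * (\<phi> t - p t) \<partial>lborel) + (\<integral>t. F t * p t \<partial>lborel)"
    using diff(1) close p_int by (intro Bochner_Integration.integral_add) (auto intro: less_imp_le)
  finally show "\<bar>\<integral>t. F t * \<phi> t \<partial>lborel\<bar> \<le> e * (\<integral>t. \<bar>F t\<bar> \<partial>lborel)"
    using diff(2) close p_orth by (auto intro: less_imp_le)
qed

lemma ramp_tendsto_indicator:
  fixes a t :: real
  shows "(\<lambda>n. min 1 (max 0 (real n * (t - a)))) \<longlonglongrightarrow> indicator {a<..} t"
proof (cases "t \<le> a")
  case True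
  then have "max 0 (real n * (t - a)) = 0" for n
    using mult_nonneg_nonpos[of "real n" "t - a"] by (simp add: max_absorb1)
  then show ?thesis using True by simp
next
  case False
  obtain N where N: "1 / (t - a) < real N" using reals_Archimedean2 by blast
  have "min 1 (max 0 (real n * (t - a))) = 1" if "N \<le> n" for n
  proof -
    have "1 / (t - a) < real n" using N that by (meson less_le_trans of_nat_le_iff)
    then have "1 < real n * (t - a)" using False by (simp add: field_simps)
    then show ?thesis by simp
  qed
  then have "eventually (\<lambda>n. min 1 (max 0 (real n * (t - a))) = indicator {a<..} t) sequentially"
    using False unfolding eventually_sequentially by auto
  then show ?thesis by (rule tendsto_eventually)
qed

text \<open>Orthogonality to continuous functions passes to indicators of half-lines, by dominated
  convergence along the ramps above.\<close>
lemma integral_halfline_vanish_of_continuous: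
  fixes F :: "real \<Rightarrow> real"
  assumes F: "integrable lborel F"
    and orth: "\<And>\<phi>. continuous_on UNIV \<phi> \<Longrightarrow> (\<integral>t. F t * \<phi> t \<partial>lborel) = 0"
  shows "(\<integral>t. F t * indicator {a<..} t \<partial>lborel) = 0"
proof -
  have [measurable]: "F \<in> borel_measurable lborel" using F by (rule borel_measurable_integrable)
  define s where "s n t = F t * min 1 (max 0 (real n * (t - a)))" for n t
  have "(\<lambda>n. integral\<^sup>L lborel (s n)) \<longlonglongrightarrow> (\<integral>t. F t * indicator {a<..} t \<partial>lborel)"
  proof (rule integral_dominated_convergence[where w = "\<lambda>t. \<bar>F t\<bar>"])
    show "AE t in lborel. (\<lambda>n. s n t) \<longlonglongrightarrow> F t * indicator {a<..} t"
      unfolding s_def by (intro AE_I2 tendsto_mult_left ramp_tendsto_indicator)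
    show "AE t in lborel. norm (s n t) \<le> \<bar>F t\<bar>" for n
      unfolding s_def by (auto simp: abs_mult intro!: mult_left_le)
    show "s n \<in> borel_measurable lborel" for n
      unfolding s_def by measurable
  qed (use F in auto)
  moreover have "integral\<^sup>L lborel (s n) = 0" for n
    unfolding s_def by (rule orth) (intro continuous_intros)
  ultimately show ?thesis by (simp add: LIMSEQ_const_iff)
qed

lemma emeasure_density_halfline:
  fixes Q :: "real \<Rightarrow> real"
  assumes Q: "integrable lborel Q" and Q_nonneg: "\<And>t. Q t \<ge> 0"
  shows "emeasure (density lborel (\<lambda>t. ennreal (Q t))) {a<..} = ennreal (\<integral>t. Q t * indicator {a<..} t \<partial>lborel)"
proof -
  have [measurable]: "Q \<in> borel_measurable lborel" using Q by (rule borel_measurable_integrable)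
  have "emeasure (density lborel (\<lambda>t. ennreal (Q t))) {a<..} = (\<integral>\<^sup>+ t. ennreal (Q t) * indicator {a<..} t \<partial>lborel)"
    by (rule emeasure_density) auto
  also have "\<dots> = (\<integral>\<^sup>+ t. ennreal (Q t * indicator {a<..} t) \<partial>lborel)"
    by (intro nn_integral_cong) (auto split: split_indicator)
  also have "\<dots> = ennreal (\<integral>t. Q t * indicator {a<..} t \<partial>lborel)"
    by (rule nn_integral_eq_integral) (auto intro: integrable_real_mult_indicator Q simp: Q_nonneg)
  finally show ?thesis .
qed

text \<open>An integrable function whose integrals over all half-lines vanish is zero a.e.: its positive
  and negative parts define measures agreeing on half-lines, hence equal measures, hence
  a.e. equal densities.\<close>
lemma AE_zero_of_halfline_integrals:
  fixes F :: "real \<Rightarrow> real"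
  assumes F: "integrable lborel F"
    and halfline: "\<And>a. (\<integral>t. F t * indicator {a<..} t \<partial>lborel) = 0"
  shows "AE t in lborel. F t = 0"
proof -
  have [measurable]: "F \<in> borel_measurable lborel" using F by (rule borel_measurable_integrable)
  define P where "P t = max 0 (F t)" for t
  define N where "N t = max 0 (- F t)" for t
  have P_int: "integrable lborel P" unfolding P_def by (intro integrable_max F) simp
  have N_int: "integrable lborel N" unfolding N_def by (intro integrable_max integrable_minus F) simp
  have same_mass: "(\<integral>t. P t * indicator {a<..} t \<partial>lborel) = (\<integral>t. N t * indicator {a<..} t \<partial>lborel)" for a
  proof -
    have "(\<integral>t. P t * indicator {a<..} t \<partial>lborel) - (\<integral>t. N t * indicator {a<..} t \<partial>lborel)
        = (\<integral>t. P t * indicator {a<..} t - N t * indicator {a<..} t \<partial>lborel)"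
      by (rule Bochner_Integration.integral_diff[symmetric])
        (auto intro: integrable_real_mult_indicator P_int N_int)
    also have "\<dots> = (\<integral>t. F t * indicator {a<..} t \<partial>lborel)"
      by (intro Bochner_Integration.integral_cong) (auto simp: P_def N_def split: split_indicator)
    finally show ?thesis using halfline[of a] by simp
  qed
  have "density lborel (\<lambda>t. ennreal (P t)) = density lborel (\<lambda>t. ennreal (N t))"
  proof (rule measure_eqI_lessThan)
    show "emeasure (density lborel (\<lambda>t. ennreal (P t))) {a<..} < \<infinity>" for a
      using emeasure_density_halfline[OF P_int, of a] by (simp add: P_def)
    show "emeasure (density lborel (\<lambda>t. ennreal (P t))) {a<..} = emeasure (density lborel (\<lambda>t. ennreal (N t))) {a<..}" for a
      using emeasure_density_halfline[OF P_int, of a] emeasure_density_halfline[OF N_int, of a] same_mass[of a]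
      by (simp add: P_def N_def)
  qed simp_all
  then have "AE t in lborel. ennreal (P t) = ennreal (N t)"
    by (intro sigma_finite_measure.density_unique[OF lborel.sigma_finite_measure_axioms])
      (auto simp: P_def N_def)
  then show ?thesis
    by eventually_elim (auto simp: P_def N_def max_def split: if_splits)
qed

theorem AE_zero_of_Stieltjes_vanish:
  fixes F :: "real \<Rightarrow> real"
  assumes F: "integrable lborel F" and F_supp: "\<And>t. t \<notin> {0..1} \<Longrightarrow> F t = 0"
    and zero: "\<And>y. y > 0 \<Longrightarrow> (\<integral>t. F t * (1 / (1 + t * y)) \<partial>lborel) = 0"
  shows "AE t in lborel. F t = 0"
proof (rule AE_zero_of_halfline_integrals[OF F])
  fix a :: real
  have "(\<integral>t. F t * t ^ k \<partial>lborel) = 0" for k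
    by (rule moments_vanish_of_Stieltjes_vanish[OF F F_supp zero])
  then have "(\<integral>t. F t * \<phi> t \<partial>lborel) = 0" if "continuous_on UNIV \<phi>" for \<phi>
    using integral_continuous_vanish_of_moments[OF F F_supp _ that] by blast
  then show "(\<integral>t. F t * indicator {a<..} t \<partial>lborel) = 0"
    by (rule integral_halfline_vanish_of_continuous[OF F])
qed

section \<open>The reflection defect of \<open>f_ac\<close>\<close>

lemma f_ac_eq_integral: "f_ac g x = (\<integral>t. indicator {0..1} t * g t * harm_mean t x \<partial>lborel)"
  unfolding f_ac_def set_lebesgue_integral_def by (simp add: mult.assoc)

lemma indicator_unit_reflect [simp]: "indicator {0..1} (1 - t) = (indicator {0..1} t :: real)"
  for t :: real
  by (auto split: split_indicator)

lemma set_integrable_reflect: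
  fixes g :: "real \<Rightarrow> real"
  assumes "set_integrable lborel {0..1} g"
  shows "set_integrable lborel {0..1} (\<lambda>t. g (1 - t))"
proof -
  have "integrable lborel (\<lambda>t. indicator {0..1} (1 - t) * g (1 - t))"
    using assms lborel_integrable_real_affine_iff[of "-1" "\<lambda>t. indicator {0..1} t * g t" 1]
    unfolding set_integrable_def by simp
  then show ?thesis unfolding set_integrable_def by simp
qed

definition antisym_part :: "(real \<Rightarrow> real) \<Rightarrow> real \<Rightarrow> real" where
  "antisym_part g t = indicator {0..1} t * (g t - g (1 - t))"

lemma antisym_part_outside: "t \<notin> {0..1} \<Longrightarrow> antisym_part g t = 0"
  by (simp add: antisym_part_def)

lemma integrable_antisym_part:
  assumes "set_integrable lborel {0..1} g"
  shows "integrable lborel (antisym_part g)"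
  using set_integral_diff(1)[OF assms set_integrable_reflect[OF assms]]
  unfolding set_integrable_def antisym_part_def by simp

lemma AE_antisym_part_zero_iff:
  "(AE t in lborel. antisym_part g t = 0) \<longleftrightarrow> (AE t in lborel. t \<in> {0..1} \<longrightarrow> g (1 - t) = g t)"
  unfolding antisym_part_def by (intro AE_cong, case_tac "t \<in> {0..1}") auto

lemma f_ac_reflection_defect:
  fixes g :: "real \<Rightarrow> real"
  assumes g: "set_integrable lborel {0..1} g" and x: "x > 0"
  shows "f_ac g x - x * f_ac g (1 / x) = (\<integral>t. antisym_part g t * harm_mean t x \<partial>lborel)"
proof -
  define G where "G g' t = indicator {0..1} t * g' t" for g' :: "real \<Rightarrow> real" and t
  have G_int: "integrable lborel (G g')" if "set_integrable lborel {0..1} g'" for g'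
    using that unfolding set_integrable_def G_def by simp
  have weighted_int: "integrable lborel (\<lambda>t. G g' t * harm_mean t x)"
    if "set_integrable lborel {0..1} g'" for g'
    using integrable_bounded_multiplier(1)[OF G_int[OF that] _ harm_mean_measurable[of x], of "1 + x"]
      harm_mean_bound[OF x] by (auto simp: G_def)
  have "x * f_ac g (1 / x) = (\<integral>t. G g t * (x * harm_mean t (1 / x)) \<partial>lborel)"
    unfolding f_ac_eq_integral G_def by (simp add: ac_simps)
  also have "\<dots> = (\<integral>t. G g t * harm_mean (1 - t) x \<partial>lborel)"
    using harm_mean_reflect[OF x]
    by (intro Bochner_Integration.integral_cong) (auto simp: G_def split: split_indicator)
  also have "\<dots> = (\<integral>t. G (\<lambda>t. g (1 - t)) t * harm_mean t x \<partial>lborel)"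
    using lborel_integral_real_affine[of "-1" "\<lambda>t. G g t * harm_mean (1 - t) x" 1]
    by (simp add: G_def)
  finally have "f_ac g x - x * f_ac g (1 / x)
      = (\<integral>t. G g t * harm_mean t x \<partial>lborel) - (\<integral>t. G (\<lambda>t. g (1 - t)) t * harm_mean t x \<partial>lborel)"
    by (simp add: f_ac_eq_integral G_def)
  also have "\<dots> = (\<integral>t. G g t * harm_mean t x - G (\<lambda>t. g (1 - t)) t * harm_mean t x \<partial>lborel)"
    using weighted_int[OF g] weighted_int[OF set_integrable_reflect[OF g]]
    by (rule Bochner_Integration.integral_diff[symmetric])
  also have "\<dots> = (\<integral>t. antisym_part g t * harm_mean t x \<partial>lborel)"
    by (simp add: G_def antisym_part_def algebra_simps)
  finally show ?thesis .
qed

text \<open>Symmetry of \<open>f_ac g\<close> means exactly that the antisymmetric part of \<open>g\<close> vanishes a.e.: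
  one direction is immediate from the reflection formula, the other evaluates it at
  \<open>x = 1/(1+y)\<close> and applies the uniqueness theorem for the Stieltjes-type transform.\<close>
lemma f_ac_symmetric_iff:
  fixes g :: "real \<Rightarrow> real"
  assumes g: "set_integrable lborel {0..1} g"
  shows "(\<forall>x>0. f_ac g x = x * f_ac g (1 / x)) \<longleftrightarrow> (AE t in lborel. antisym_part g t = 0)"
proof
  assume symmetric: "\<forall>x>0. f_ac g x = x * f_ac g (1 / x)"
  have "(\<integral>t. antisym_part g t * (1 / (1 + t * y)) \<partial>lborel) = 0" if y: "y > 0" for y
  proof -
    have pos: "1 / (1 + y) > 0" using y by simp
    then have "f_ac g (1 / (1 + y)) = 1 / (1 + y) * f_ac g (1 / (1 / (1 + y)))"
      using symmetric by blast
    then have "(\<integral>t. antisym_part g t * harm_mean t (1 / (1 + y)) \<partial>lborel) = 0"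
      using f_ac_reflection_defect[OF g pos] by linarith
    moreover have "antisym_part g t * harm_mean t (1 / (1 + y)) = antisym_part g t * (1 / (1 + t * y))"
      for t
      using harm_mean_kernel[OF y, of t] antisym_part_outside[of t g] by (cases "t \<in> {0..1}") auto
    ultimately show ?thesis by simp
  qed
  then show "AE t in lborel. antisym_part g t = 0"
    using AE_zero_of_Stieltjes_vanish[OF integrable_antisym_part[OF g] antisym_part_outside] by blast
next
  assume "AE t in lborel. antisym_part g t = 0"
  then have "(\<integral>t. antisym_part g t * harm_mean t x \<partial>lborel) = 0" for x
    by (intro integral_eq_zero_AE) auto
  then show "\<forall>x>0. f_ac g x = x * f_ac g (1 / x)"
    using f_ac_reflection_defect[OF g] by (metis eq_iff_diff_eq_0)
qed

text \<open>Since \<open>1 !_t 1 = 1\<close>, normalization is just the total mass of \<open>g\<close>.\<close>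
lemma f_ac_normalized_iff: "f_ac g 1 = 1 \<longleftrightarrow> (LINT t:{0..1}|lborel. g t) = 1"
  by (simp add: f_ac_def harm_mean_def)

theorem mainTheorem13:
  fixes g :: "real \<Rightarrow> real"
  assumes g_int: "set_integrable lborel {0..1} g"
    and g_nonneg: "\<And>t. t \<in> {0..1} \<Longrightarrow> g t \<ge> 0"
  shows "(f_ac g 1 = 1 \<longleftrightarrow> (LINT t:{0..1}|lborel. g t) = 1)
    \<and> ((\<forall>x>0. f_ac g x = x * f_ac g (1 / x)) \<longleftrightarrow>
         (AE t in lborel. t \<in> {0..1} \<longrightarrow> g (1 - t) = g t))"
  using f_ac_normalized_iff f_ac_symmetric_iff[OF g_int] AE_antisym_part_zero_iff by blast

end
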